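(* Let $A=\{0,1,2\}$, let $T\colon A^4\to A$ be given by $T(1,1,2,2)=T(1,2,1,2)=1$ and $T(\mathbf{x})=0$ for all other $\mathbf{x}\in A^4$, and let $f\colon A^2\to A$ be given by $f(x,y)=1$ if $\{x,y\}=\{1,2\}$ and $f(x,y)=0$ otherwise. Then $f\in\{T\}^{**}$, and the graph of $f$ is primitive positively definable from the graph of $T$: \[\{(x_2,x_3,x_5)\in A^3: f(x_2,x_3)=x_5\}=\Bigl\{(x_2,x_3,x_5)\in A^3:\exists x_1,x_4\in A\colon T(x_1,x_2,x_3,x_4)=x_5\wedge T(x_2,x_3,x_2,x_3)=T(x_1,x_2,x_4,x_3)\wedge T(x_3,x_2,x_3,x_2)=T(x_1,x_3,x_4,x_2)\Bigr\},\] which also equals $\{(x_2,x_3,x_5)\in A^3:\exists x_1,x_4,u,v\in A\colon T(x_1,x_2,x_3,x_4)=x_5\wedge T(x_2,x_3,x_2,x_3)=u\wedge T(x_1,x_2,x_4,x_3)=u\wedge T(x_3,x_2,x_3,x_2)=v\wedge T(x_1,x_3,x_4,x_2)=v\}$.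
   Context: An $m$-ary $g$ commutes with an $n$-ary $h$ if $g\bigl((h((x_{ij})_{j}))_{i}\bigr)=h\bigl((g((x_{ij})_{i}))_{j}\bigr)$ for all $(x_{ij})\in A^{m\times n}$. For a set $F$ of finitary operations on $A$ (positive arity), $F^*$ is the set of all such operations commuting with every member of $F$, and $F^{**}=(F^* )^*$. *)

theory Defs
  imports Main
begin

text \<open>A finitary operation on a carrier A is represented as a pair (n, g) with
  arity n > 0 and g applied to argument lists of length n over A.\<close>

type_synonym 'a operation = "nat \<times> ('a list \<Rightarrow> 'a)"

definition ops :: "'a set \<Rightarrow> 'a operation set" where
  "ops A = {(n, g). 0 < n \<and> (\<forall>xs. set xs \<subseteq> A \<and> length xs = n \<longrightarrow> g xs \<in> A)}"

definition commutes :: "'a set \<Rightarrow> 'a operation \<Rightarrow> 'a operation \<Rightarrow> bool" where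
  "commutes A p q \<longleftrightarrow>
     (\<forall>x :: nat \<Rightarrow> nat \<Rightarrow> 'a. (\<forall>i < fst p. \<forall>j < fst q. x i j \<in> A) \<longrightarrow>
        snd p (map (\<lambda>i. snd q (map (\<lambda>j. x i j) [0..<fst q])) [0..<fst p])
      = snd q (map (\<lambda>j. snd p (map (\<lambda>i. x i j) [0..<fst p])) [0..<fst q]))"

definition centralizer :: "'a set \<Rightarrow> 'a operation set \<Rightarrow> 'a operation set" where
  "centralizer A F = {p \<in> ops A. \<forall>q \<in> F. commutes A p q}"

definition A3 :: "nat set" where "A3 = {0, 1, 2}"

definition T4 :: "nat list \<Rightarrow> nat" where
  "T4 xs = (if xs = [1,1,2,2] \<or> xs = [1,2,1,2] then 1 else 0)"

definition f2 :: "nat list \<Rightarrow> nat" where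
  "f2 xs = (if xs = [1,2] \<or> xs = [2,1] then 1 else 0)"

end

(*
  An operation g that commutes with T, applied coordinatewise, sends solutions of
  equations between T-terms to solutions: g of the column of values T(x) is T applied
  to the g-images of the argument columns.  Hence g preserves every relation that is
  primitive positively definable from T, the existential witnesses being carried along
  coordinatewise.  A finite check on {0, 1, 2} shows that the graph of f is such a
  relation, and an operation preserving the graph of f commutes with f.
*)

theory Submission
  imports Defs
begin

lemma ops_apply_in:
  assumes "(m, g) \<in> ops A" and "\<forall>i<m. a i \<in> A"
  shows "g (map a [0..<m]) \<in> A"
proof -
  have "set (map a [0..<m]) \<subseteq> A"
    using assms(2) by auto
  with assms(1) show ?thesis
    by (auto simp: ops_def)
qed

lemma commutes_apply_columns:
  assumes comm: "commutes A (m, g) (n, h)"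
    and cs_len: "length cs = n" and cs_in: "\<forall>c\<in>set cs. \<forall>i<m. c i \<in> A"
    and y: "\<forall>i<m. y i = h (map (\<lambda>c. c i) cs)"
  shows "g (map y [0..<m]) = h (map (\<lambda>c. g (map c [0..<m])) cs)"
proof -
  define x where "x i j = (cs ! j) i" for i j
  have x_in: "\<forall>i<m. \<forall>j<n. x i j \<in> A"
    using cs_in cs_len by (auto simp: x_def)
  have rows: "map (x i) [0..<n] = map (\<lambda>c. c i) cs" for i
    by (rule nth_equalityI) (simp_all add: x_def cs_len)
  have cols: "map (\<lambda>j. g (map (\<lambda>i. x i j) [0..<m])) [0..<n] = map (\<lambda>c. g (map c [0..<m])) cs"
    by (rule nth_equalityI) (simp_all add: x_def cs_len)
  have "g (map y [0..<m]) = g (map (\<lambda>i. h (map (x i) [0..<n])) [0..<m])"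
    using y by (intro arg_cong[where f = g] map_cong) (simp_all add: rows)
  also have "\<dots> = h (map (\<lambda>j. g (map (\<lambda>i. x i j) [0..<m])) [0..<n])"
    using comm x_in unfolding commutes_def by auto
  also have "\<dots> = h (map (\<lambda>c. g (map c [0..<m])) cs)"
    by (simp only: cols)
  finally show ?thesis .
qed

lemma commutes_preserves_equation:
  assumes comm: "commutes A (m, g) (n, h)"
    and cs: "length cs = n" "\<forall>c\<in>set cs. \<forall>i<m. c i \<in> A"
    and ds: "length ds = n" "\<forall>d\<in>set ds. \<forall>i<m. d i \<in> A"
    and eq: "\<forall>i<m. h (map (\<lambda>c. c i) cs) = h (map (\<lambda>d. d i) ds)"
  shows "h (map (\<lambda>c. g (map c [0..<m])) cs) = h (map (\<lambda>d. g (map d [0..<m])) ds)"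
  using commutes_apply_columns[OF comm cs, of "\<lambda>i. h (map (\<lambda>c. c i) cs)"]
    commutes_apply_columns[OF comm ds, of "\<lambda>i. h (map (\<lambda>c. c i) cs)"] eq
  by simp

definition pp_formula :: "'a set \<Rightarrow> ('a list \<Rightarrow> 'a) \<Rightarrow> 'a \<Rightarrow> 'a \<Rightarrow> 'a \<Rightarrow> bool" where
  "pp_formula A T x2 x3 x5 \<longleftrightarrow>
     (\<exists>x1 \<in> A. \<exists>x4 \<in> A. T [x1, x2, x3, x4] = x5
        \<and> T [x2, x3, x2, x3] = T [x1, x2, x4, x3]
        \<and> T [x3, x2, x3, x2] = T [x1, x3, x4, x2])"

lemma pp_formula_iff_auxiliary_values:
  assumes "(4, T) \<in> ops A" and "x2 \<in> A" "x3 \<in> A"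
  shows "pp_formula A T x2 x3 x5 \<longleftrightarrow>
    (\<exists>x1 \<in> A. \<exists>x4 \<in> A. \<exists>u \<in> A. \<exists>v \<in> A. T [x1, x2, x3, x4] = x5
       \<and> T [x2, x3, x2, x3] = u \<and> T [x1, x2, x4, x3] = u
       \<and> T [x3, x2, x3, x2] = v \<and> T [x1, x3, x4, x2] = v)"
proof -
  have "T [x2, x3, x2, x3] \<in> A" "T [x3, x2, x3, x2] \<in> A"
    using assms by (auto simp: ops_def)
  then show ?thesis
    unfolding pp_formula_def by metis
qed

lemma commutes_preserves_pp_formula:
  assumes g_op: "(m, g) \<in> ops A" and comm: "commutes A (m, g) (4, T)"
    and a_in: "\<forall>j<m. a j \<in> A" and b_in: "\<forall>j<m. b j \<in> A"
    and pp: "\<forall>j<m. pp_formula A T (a j) (b j) (c j)"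
  shows "pp_formula A T (g (map a [0..<m])) (g (map b [0..<m])) (g (map c [0..<m]))"
proof -
  from pp obtain w1 w4 where w: "\<forall>j<m. w1 j \<in> A \<and> w4 j \<in> A \<and> T [w1 j, a j, b j, w4 j] = c j
      \<and> T [a j, b j, a j, b j] = T [w1 j, a j, w4 j, b j]
      \<and> T [b j, a j, b j, a j] = T [w1 j, b j, w4 j, a j]"
    unfolding pp_formula_def by metis
  let ?G = "\<lambda>d. g (map d [0..<m])"
  have all_in: "\<forall>d\<in>{w1, a, b, w4}. \<forall>j<m. d j \<in> A"
    using w a_in b_in by auto
  have "?G w1 \<in> A" "?G w4 \<in> A"
    using ops_apply_in[OF g_op] all_in by simp_all
  moreover have "?G c = T [?G w1, ?G a, ?G b, ?G w4]"
    using commutes_apply_columns[OF comm, of "[w1, a, b, w4]" c] all_in w by simp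
  moreover have "T [?G a, ?G b, ?G a, ?G b] = T [?G w1, ?G a, ?G w4, ?G b]"
    using commutes_preserves_equation[OF comm, of "[a, b, a, b]" "[w1, a, w4, b]"] all_in w
    by simp
  moreover have "T [?G b, ?G a, ?G b, ?G a] = T [?G w1, ?G b, ?G w4, ?G a]"
    using commutes_preserves_equation[OF comm, of "[b, a, b, a]" "[w1, b, w4, a]"] all_in w
    by simp
  ultimately show ?thesis
    unfolding pp_formula_def by metis
qed

lemma graph_pp_definable_in_bicentralizer:
  assumes f_op: "(2, f) \<in> ops A"
    and graph: "\<And>x2 x3 x5. x2 \<in> A \<Longrightarrow> x3 \<in> A \<Longrightarrow> x5 \<in> A \<Longrightarrow>
      f [x2, x3] = x5 \<longleftrightarrow> pp_formula A T x2 x3 x5"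
  shows "(2, f) \<in> centralizer A (centralizer A {(4, T)})"
proof -
  have "commutes A (2, f) (m, g)"
    if g_op: "(m, g) \<in> ops A" and comm: "commutes A (m, g) (4, T)" for m g
  proof (unfold commutes_def, intro allI impI)
    fix x :: "nat \<Rightarrow> nat \<Rightarrow> 'a"
    assume x_in: "\<forall>i<fst (2::nat, f). \<forall>j<fst (m, g). x i j \<in> A"
    define a b c where "a = x 0" and "b = x 1" and "c = (\<lambda>j. f [a j, b j])"
    have a_in: "\<forall>j<m. a j \<in> A" and b_in: "\<forall>j<m. b j \<in> A"
      using x_in by (auto simp: a_def b_def)
    have c_in: "\<forall>j<m. c j \<in> A"
      using f_op a_in b_in by (auto simp: c_def ops_def)
    have "\<forall>j<m. pp_formula A T (a j) (b j) (c j)"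
      using graph a_in b_in c_in unfolding c_def by (metis (no_types))
    then have "pp_formula A T (g (map a [0..<m])) (g (map b [0..<m])) (g (map c [0..<m]))"
      using commutes_preserves_pp_formula[OF g_op comm a_in b_in] by blast
    then have "f [g (map a [0..<m]), g (map b [0..<m])] = g (map c [0..<m])"
      using graph ops_apply_in[OF g_op] a_in b_in c_in by simp
    then show "snd (2::nat, f) (map (\<lambda>i. snd (m, g) (map (x i) [0..<fst (m, g)])) [0..<fst (2::nat, f)])
      = snd (m, g) (map (\<lambda>j. snd (2::nat, f) (map (\<lambda>i. x i j) [0..<fst (2::nat, f)])) [0..<fst (m, g)])"
      by (simp add: a_def b_def c_def eval_nat_numeral upt_Suc)
  qed
  with f_op show ?thesis
    unfolding centralizer_def by auto
qed

lemma T4_op: "(4, T4) \<in> ops A3"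
  by (simp add: ops_def T4_def A3_def)

lemma f2_op: "(2, f2) \<in> ops A3"
  by (simp add: ops_def f2_def A3_def)

lemma bex_A3: "(\<exists>x\<in>A3. P x) \<longleftrightarrow> P 0 \<or> P 1 \<or> P 2"
  by (auto simp: A3_def)

lemma f2_graph_pp_definable:
  assumes "x2 \<in> A3" "x3 \<in> A3" "x5 \<in> A3"
  shows "f2 [x2, x3] = x5 \<longleftrightarrow> pp_formula A3 T4 x2 x3 x5"
  using assms unfolding pp_formula_def bex_A3 unfolding A3_def insert_iff empty_iff
  by (elim disjE) (simp_all add: T4_def f2_def)

theorem lemma3p12:
  shows "(2, f2) \<in> centralizer A3 (centralizer A3 {(4, T4)})
    \<and> {(x2, x3, x5). x2 \<in> A3 \<and> x3 \<in> A3 \<and> x5 \<in> A3 \<and> f2 [x2, x3] = x5}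
      = {(x2, x3, x5). x2 \<in> A3 \<and> x3 \<in> A3 \<and> x5 \<in> A3 \<and>
           (\<exists>x1 \<in> A3. \<exists>x4 \<in> A3. T4 [x1, x2, x3, x4] = x5
              \<and> T4 [x2, x3, x2, x3] = T4 [x1, x2, x4, x3]
              \<and> T4 [x3, x2, x3, x2] = T4 [x1, x3, x4, x2])}
    \<and> {(x2, x3, x5). x2 \<in> A3 \<and> x3 \<in> A3 \<and> x5 \<in> A3 \<and>
           (\<exists>x1 \<in> A3. \<exists>x4 \<in> A3. T4 [x1, x2, x3, x4] = x5
              \<and> T4 [x2, x3, x2, x3] = T4 [x1, x2, x4, x3]
              \<and> T4 [x3, x2, x3, x2] = T4 [x1, x3, x4, x2])}
      = {(x2, x3, x5). x2 \<in> A3 \<and> x3 \<in> A3 \<and> x5 \<in> A3 \<and>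
           (\<exists>x1 \<in> A3. \<exists>x4 \<in> A3. \<exists>u \<in> A3. \<exists>v \<in> A3. T4 [x1, x2, x3, x4] = x5
              \<and> T4 [x2, x3, x2, x3] = u \<and> T4 [x1, x2, x4, x3] = u
              \<and> T4 [x3, x2, x3, x2] = v \<and> T4 [x1, x3, x4, x2] = v)}"
proof -
  have "{(x2, x3, x5). x2 \<in> A3 \<and> x3 \<in> A3 \<and> x5 \<in> A3 \<and> f2 [x2, x3] = x5}
      = {(x2, x3, x5). x2 \<in> A3 \<and> x3 \<in> A3 \<and> x5 \<in> A3 \<and> pp_formula A3 T4 x2 x3 x5}"
    using f2_graph_pp_definable by blast
  moreover have "{(x2, x3, x5). x2 \<in> A3 \<and> x3 \<in> A3 \<and> x5 \<in> A3 \<and> pp_formula A3 T4 x2 x3 x5}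
      = {(x2, x3, x5). x2 \<in> A3 \<and> x3 \<in> A3 \<and> x5 \<in> A3 \<and>
           (\<exists>x1 \<in> A3. \<exists>x4 \<in> A3. \<exists>u \<in> A3. \<exists>v \<in> A3. T4 [x1, x2, x3, x4] = x5
              \<and> T4 [x2, x3, x2, x3] = u \<and> T4 [x1, x2, x4, x3] = u
              \<and> T4 [x3, x2, x3, x2] = v \<and> T4 [x1, x3, x4, x2] = v)}"
    using pp_formula_iff_auxiliary_values[OF T4_op] by blast
  ultimately show ?thesis
    using graph_pp_definable_in_bicentralizer[OF f2_op f2_graph_pp_definable]
    unfolding pp_formula_def by (intro conjI)
qed

end
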